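(* Let $n\ge 1$ be an integer and let $\alpha_0,\ldots,\alpha_{2n+1},\eta\in\mathbb{C}$ with $\sum_{i=0}^{2n+1}\alpha_i=1$. Consider the Hamiltonian system \[ \frac{dx_i}{dt}=\frac{\partial H}{\partial y_i},\qquad \frac{dy_i}{dt}=-\frac{\partial H}{\partial x_i},\qquad i=0,\ldots,n, \] with Hamiltonian \[ H=\frac1t\sum_{i=0}^{n}\Big\{\tfrac12 x_i^2y_i^2-\alpha_{2i+2}^{2n-2i-1}x_iy_i+\sum_{j=0}^{i-1}x_i(x_iy_i+\alpha_{2i+1})y_j\Big\}+\frac{1}{1-t}\sum_{i=0}^{n}\sum_{j=0}^{n}x_i(x_iy_i+\alpha_{2i+1})y_j , \] where the dependent variables satisfy $\sum_{i=0}^n x_iy_i+\eta=0$. Then this system admits the specialization $y_i=0$ $(i=0,\ldots,n)$, $\eta=0$ (i.e. with $\eta=0$, setting $y_0=\cdots=y_n\equiv0$ is compatible with the system), and under this specialization the vector $\mathbf{x}={}^t(x_0,\ldots,x_n)$ satisfies the linear system on $\mathbb{P}^1(\mathbb{C})$ \[ \frac{d\mathbf{x}}{dt}=\Big(\frac{A_0}{t}+\frac{A_1}{1-t}\Big)\mathbf{x}, \] with \[ A_0=\sum_{i=0}^{n-1}\big(-\alpha_{2i+2}^{2n-2i-1}\big)E_{i,i}+\sum_{i=0}^{n-1}\sum_{j=i+1}^{n}\alpha_{2j+1}E_{i,j},\qquad A_1=\sum_{i=0}^{n}\sum_{j=0}^{n}\alpha_{2j+1}E_{i,j}. \] Furthermore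 this linear system is of Fuchsian type with regular singular points at $t=0,1,\infty$, and the eigenvalues of its residue matrices are: $-\alpha_2^{2n-1},-\alpha_4^{2n-3},\ldots,-\alpha_{2n}^{1},0$ at $t=0$; $0,\ldots,0$ ($n$ times), $-\sum_{i=0}^n\alpha_{2i+1}$ at $t=1$; $\alpha_1^{2n},\alpha_3^{2n-2},\ldots,\alpha_{2n-1}^{2},\alpha_{2n+1}$ at $t=\infty$.
   Context: Indices of the parameters $\alpha_i$ are taken modulo $2n+2$. For integers $k,l$, $\alpha_k^l=0$ if $l<0$ and $\alpha_k^l=\sum_{i=k}^{k+l}\alpha_i$ if $l\ge0$. $E_{i,j}=(\delta_{i,k}\delta_{j,l})_{k,l=0}^{n}$ denotes the $(n+1)\times(n+1)$ matrix unit (rows and columns indexed $0,\ldots,n$). *)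

theory Defs
  imports "HOL-Analysis.Derivative" "Jordan_Normal_Form.Char_Poly"
begin

definition alp :: "nat \<Rightarrow> (nat \<Rightarrow> complex) \<Rightarrow> nat \<Rightarrow> complex" where
  "alp n \<alpha> k = \<alpha> (k mod (2*n+2))"

text \<open>alpha_k^l: zero for l < 0, otherwise sum of alpha_i for i = k..k+l.\<close>
definition asum :: "nat \<Rightarrow> (nat \<Rightarrow> complex) \<Rightarrow> nat \<Rightarrow> int \<Rightarrow> complex" where
  "asum n \<alpha> k l = (if l < 0 then 0 else (\<Sum>i=k..k + nat l. alp n \<alpha> i))"

definition ham :: "nat \<Rightarrow> (nat \<Rightarrow> complex) \<Rightarrow> complex \<Rightarrow> (nat \<Rightarrow> complex) \<Rightarrow> (nat \<Rightarrow> complex) \<Rightarrow> complex" where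
  "ham n \<alpha> t x y =
     (1/t) * (\<Sum>i\<le>n. (1/2) * (x i)^2 * (y i)^2
                    - asum n \<alpha> (2*i+2) (2*int n - 2*int i - 1) * x i * y i
                    + (\<Sum>j<i. x i * (x i * y i + alp n \<alpha> (2*i+1)) * y j))
   + (1/(1-t)) * (\<Sum>i\<le>n. \<Sum>j\<le>n. x i * (x i * y i + alp n \<alpha> (2*i+1)) * y j)"

definition dH_dx :: "nat \<Rightarrow> (nat \<Rightarrow> complex) \<Rightarrow> complex \<Rightarrow> (nat \<Rightarrow> complex) \<Rightarrow> (nat \<Rightarrow> complex) \<Rightarrow> nat \<Rightarrow> complex" where
  "dH_dx n \<alpha> t x y i = deriv (\<lambda>z. ham n \<alpha> t (x(i := z)) y) (x i)"

definition dH_dy :: "nat \<Rightarrow> (nat \<Rightarrow> complex) \<Rightarrow> complex \<Rightarrow> (nat \<Rightarrow> complex) \<Rightarrow> (nat \<Rightarrow> complex) \<Rightarrow> nat \<Rightarrow> complex" where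
  "dH_dy n \<alpha> t x y i = deriv (\<lambda>z. ham n \<alpha> t x (y(i := z))) (y i)"

definition ham_solution ::
  "nat \<Rightarrow> (nat \<Rightarrow> complex) \<Rightarrow> complex \<Rightarrow> complex set \<Rightarrow> (complex \<Rightarrow> nat \<Rightarrow> complex) \<Rightarrow> (complex \<Rightarrow> nat \<Rightarrow> complex) \<Rightarrow> bool" where
  "ham_solution n \<alpha> \<eta> U x y \<longleftrightarrow>
     (\<forall>t\<in>U. (\<forall>i\<le>n.
        ((\<lambda>s. x s i) has_field_derivative dH_dy n \<alpha> t (x t) (y t) i) (at t) \<and>
        ((\<lambda>s. y s i) has_field_derivative - dH_dx n \<alpha> t (x t) (y t) i) (at t))
      \<and> (\<Sum>i\<le>n. x t i * y t i) + \<eta> = 0)"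

definition A0 :: "nat \<Rightarrow> (nat \<Rightarrow> complex) \<Rightarrow> complex mat" where
  "A0 n \<alpha> = mat (n+1) (n+1) (\<lambda>(i,j).
      (if i = j \<and> i < n then - asum n \<alpha> (2*i+2) (2*int n - 2*int i - 1) else 0)
    + (if i < n \<and> i < j \<and> j \<le> n then alp n \<alpha> (2*j+1) else 0))"

definition A1 :: "nat \<Rightarrow> (nat \<Rightarrow> complex) \<Rightarrow> complex mat" where
  "A1 n \<alpha> = mat (n+1) (n+1) (\<lambda>(i,j). alp n \<alpha> (2*j+1))"

definition coeff :: "nat \<Rightarrow> (nat \<Rightarrow> complex) \<Rightarrow> complex \<Rightarrow> complex mat" where
  "coeff n \<alpha> t = (1/t) \<cdot>\<^sub>m A0 n \<alpha> + (1/(1-t)) \<cdot>\<^sub>m A1 n \<alpha>"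

definition lin_solution ::
  "nat \<Rightarrow> (complex \<Rightarrow> complex mat) \<Rightarrow> complex set \<Rightarrow> (complex \<Rightarrow> nat \<Rightarrow> complex) \<Rightarrow> bool" where
  "lin_solution N C U x \<longleftrightarrow>
     (\<forall>t\<in>U. \<forall>i<N. ((\<lambda>s. x s i) has_field_derivative (\<Sum>j<N. C t $$ (i,j) * x t j)) (at t))"

text \<open>Fuchsian type: the N x N coefficient matrix is a sum of simple-pole terms
  R_p/(t-p) over a finite set P of finite singular points (so all singular points,
  including infinity, are regular singular points).\<close>
definition fuchsian :: "nat \<Rightarrow> (complex \<Rightarrow> complex mat) \<Rightarrow> complex set \<Rightarrow> bool" where
  "fuchsian N C P \<longleftrightarrow> finite P \<and>
     (\<exists>R. (\<forall>p\<in>P. R p \<in> carrier_mat N N) \<and>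
          (\<forall>t. t \<notin> P \<longrightarrow> C t \<in> carrier_mat N N \<and>
               (\<forall>i<N. \<forall>j<N. C t $$ (i,j) = (\<Sum>p\<in>P. R p $$ (i,j) / (t - p)))))"

definition residue_at :: "nat \<Rightarrow> (complex \<Rightarrow> complex mat) \<Rightarrow> complex \<Rightarrow> complex mat \<Rightarrow> bool" where
  "residue_at N C p R \<longleftrightarrow> R \<in> carrier_mat N N \<and>
     (\<forall>i<N. \<forall>j<N. ((\<lambda>t. (t - p) * C t $$ (i,j)) \<longlongrightarrow> R $$ (i,j)) (at p))"

text \<open>Residue matrix at infinity: in s = 1/t, dx/ds = -(1/s^2) C(1/s) x, so the
  residue is the limit of -t C(t) as t \<rightarrow> infinity.\<close>
definition residue_at_inf :: "nat \<Rightarrow> (complex \<Rightarrow> complex mat) \<Rightarrow> complex mat \<Rightarrow> bool" where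
  "residue_at_inf N C R \<longleftrightarrow> R \<in> carrier_mat N N \<and>
     (\<forall>i<N. \<forall>j<N. ((\<lambda>t. - t * C t $$ (i,j)) \<longlongrightarrow> R $$ (i,j)) at_infinity)"

end

(* With y = 0 every monomial of the Hamiltonian contains a factor y_j, so dH/dx_i vanishes and the
   y-equations and the constraint (with eta = 0) hold trivially, while dH/dy_i at y = 0 is the linear
   part of H along the y_i-axis: the i-th entry of (A_0/t + A_1/(1-t)) x.
   The coefficient matrix has simple poles at 0 and 1 only, with residues A_0 and -A_1, and residue
   A_1 - A_0 at infinity. A_0 is upper and A_1 - A_0 lower triangular, so their eigenvalues are the
   diagonal entries (for A_1 - A_0, alpha_{2i+1} + alpha_{2i+2}^{2n-2i-1} = alpha_{2i+1}^{2n-2i}).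
   All rows of -A_1 coincide; conjugating by the first-difference matrix makes it upper triangular
   with diagonal (-sum_j alpha_{2j+1}, 0, ..., 0). *)
theory Submission
  imports Defs
begin

lemma sum_atMost_if_less:
  "(\<Sum>j\<le>n. if i < j then f j else 0) = (\<Sum>j\<in>{i<..n::nat}. f j :: 'a :: comm_monoid_add)"
  by (rule sum.mono_neutral_cong_right) auto

lemma sum_delta_of_bool_mult:
  "finite A \<Longrightarrow> (\<Sum>j\<in>A. of_bool (j = i) * f j) = (if i \<in> A then f i else 0 :: 'a :: semiring_1)"
  by (simp add: of_bool_def if_distrib[of "\<lambda>u. u * _"] cong: if_cong)

lemma char_poly_upper_triangular_prod:
  assumes "A \<in> carrier_mat N N" and "upper_triangular A"
  shows "char_poly A = (\<Prod>i<N. [:- A $$ (i,i), 1:])"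
proof -
  have "char_poly A = (\<Prod>i\<leftarrow>[0..<N]. [:- A $$ (i,i), 1:])"
    using char_poly_upper_triangular[OF assms] assms(1) by (simp add: diag_mat_def comp_def)
  also have "\<dots> = (\<Prod>i<N. [:- A $$ (i,i), 1:])"
    by (simp add: prod.distinct_set_conv_list[symmetric] atLeast0LessThan)
  finally show ?thesis .
qed

lemma char_poly_lower_triangular_prod:
  assumes "A \<in> carrier_mat N N" and "upper_triangular (transpose_mat A)"
  shows "char_poly A = (\<Prod>i<N. [:- A $$ (i,i), 1:])"
  using char_poly_upper_triangular_prod[of "transpose_mat A" N] assms by simp

definition difference_mat :: "nat \<Rightarrow> 'a :: ring_1 mat" where
  "difference_mat N = mat N N (\<lambda>(i,j). if j = i then 1 else if i = j + 1 then -1 else 0)"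

definition summation_mat :: "nat \<Rightarrow> 'a :: ring_1 mat" where
  "summation_mat N = mat N N (\<lambda>(i,j). if j \<le> i then 1 else 0)"

lemma difference_mat_carrier [simp]: "difference_mat N \<in> carrier_mat N N"
  by (simp add: difference_mat_def)

lemma summation_mat_carrier [simp]: "summation_mat N \<in> carrier_mat N N"
  by (simp add: summation_mat_def)

lemma index_mult_mat_sum:
  "A \<in> carrier_mat N K \<Longrightarrow> B \<in> carrier_mat K M \<Longrightarrow> i < N \<Longrightarrow> j < M \<Longrightarrow>
     (A * B) $$ (i,j) = (\<Sum>k<K. A $$ (i,k) * B $$ (k,j))"
  by (simp add: scalar_prod_def atLeast0LessThan)

lemma difference_mat_summation_mat: "difference_mat N * summation_mat N = (1\<^sub>m N :: 'a :: ring_1 mat)"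
proof (rule eq_matI)
  fix i j assume "i < dim_row (1\<^sub>m N :: 'a mat)" "j < dim_col (1\<^sub>m N :: 'a mat)"
  then have ij: "i < N" "j < N" by auto
  have "(difference_mat N * summation_mat N :: 'a mat) $$ (i,j) =
      (\<Sum>k<N. difference_mat N $$ (i,k) * summation_mat N $$ (k,j))"
    using ij by (intro index_mult_mat_sum) auto
  also have "\<dots> = (\<Sum>k<N. (if k = i then (if j \<le> i then 1 else 0) else 0)
              - (if k + 1 = i then (if j \<le> k then 1 else 0) else 0))"
    using ij by (intro sum.cong) (auto simp: difference_mat_def summation_mat_def)
  also have "\<dots> = 1\<^sub>m N $$ (i,j)"
    using ij by (cases i) (auto simp: sum_subtractf)
  finally show "(difference_mat N * summation_mat N :: 'a mat) $$ (i,j) = 1\<^sub>m N $$ (i,j)" .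
qed (auto simp: difference_mat_def summation_mat_def)

lemma summation_mat_difference_mat: "summation_mat N * difference_mat N = (1\<^sub>m N :: 'a :: field mat)"
  by (rule mat_mult_left_right_inverse[OF _ _ difference_mat_summation_mat]) auto

lemma char_poly_equal_rows:
  fixes a :: "nat \<Rightarrow> 'a :: field"
  assumes "0 < N"
  shows "char_poly (mat N N (\<lambda>(i,j). a j)) = [:- (\<Sum>j<N. a j), 1:] * [:0, 1:] ^ (N - 1)"
proof -
  \<comment> \<open>T is difference_mat N * M * summation_mat N: subtracting consecutive rows of M
    leaves only its first row.\<close>
  define T :: "'a mat" where "T = mat N N (\<lambda>(i,j). if i = 0 then \<Sum>k\<in>{j..<N}. a k else 0)"
  define R :: "'a mat" where "R = mat N N (\<lambda>(i,j). if i = 0 then a j else 0)"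
  have T_carrier: "T \<in> carrier_mat N N" by (simp add: T_def)
  have T_difference: "T * difference_mat N = R"
  proof (rule eq_matI)
    fix i j assume "i < dim_row R" "j < dim_col R"
    then have ij: "i < N" "j < N" by (auto simp: R_def)
    have "(T * difference_mat N) $$ (i,j) = (\<Sum>k<N. T $$ (i,k) * difference_mat N $$ (k,j))"
      using ij by (intro index_mult_mat_sum) (auto simp: T_def)
    also have "\<dots> = (\<Sum>k<N. (if k = j then T $$ (i,j) else 0) - (if k = j + 1 then T $$ (i,j+1) else 0))"
      using ij by (intro sum.cong) (auto simp: difference_mat_def)
    also have "\<dots> = T $$ (i,j) - (if j + 1 < N then T $$ (i,j+1) else 0)"
      using ij by (simp add: sum_subtractf)
    also have "\<dots> = R $$ (i,j)"
      using ij by (cases "j + 1 < N") (auto simp: T_def R_def sum.atLeast_Suc_lessThan)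
    finally show "(T * difference_mat N) $$ (i,j) = R $$ (i,j)" .
  qed (auto simp: T_def R_def difference_mat_def)
  have summation_R: "summation_mat N * R = mat N N (\<lambda>(i,j). a j)"
  proof (rule eq_matI)
    fix i j assume "i < dim_row (mat N N (\<lambda>(i,j). a j))" "j < dim_col (mat N N (\<lambda>(i,j). a j))"
    then have ij: "i < N" "j < N" by auto
    have "(summation_mat N * R) $$ (i,j) = (\<Sum>k<N. summation_mat N $$ (i,k) * R $$ (k,j))"
      using ij by (intro index_mult_mat_sum) (auto simp: R_def)
    also have "\<dots> = (\<Sum>k<N. if k = 0 then a j else 0)"
      using ij by (intro sum.cong) (auto simp: summation_mat_def R_def)
    finally show "(summation_mat N * R) $$ (i,j) = mat N N (\<lambda>(i,j). a j) $$ (i,j)"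
      using ij by simp
  qed (auto simp: summation_mat_def R_def)
  have factorisation: "mat N N (\<lambda>(i,j). a j) = summation_mat N * T * difference_mat N"
    using assoc_mult_mat[OF summation_mat_carrier T_carrier difference_mat_carrier]
    by (simp add: T_difference summation_R)
  have "similar_mat (mat N N (\<lambda>(i,j). a j)) T"
    by (rule similar_matI[OF _ summation_mat_difference_mat difference_mat_summation_mat
          factorisation])
       (simp add: T_carrier)
  then have "char_poly (mat N N (\<lambda>(i,j). a j)) = char_poly T"
    by (rule char_poly_similar)
  also have "\<dots> = (\<Prod>i<N. [:- T $$ (i,i), 1:])"
    by (rule char_poly_upper_triangular_prod[OF T_carrier]) (simp add: T_def upper_triangular_def)
  also obtain m where "N = Suc m" using assms gr0_implies_Suc by blast
  then have "(\<Prod>i<N. [:- T $$ (i,i), 1:]) = [:- (\<Sum>j<N. a j), 1:] * [:0, 1:] ^ (N - 1)"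
    by (simp add: prod.lessThan_Suc_shift T_def atLeast0LessThan del: prod.lessThan_Suc)
  finally show ?thesis .
qed

context
  fixes N :: nat and A B :: "complex mat"
  assumes A: "A \<in> carrier_mat N N" and B: "B \<in> carrier_mat N N"
begin

lemma two_pole_entry:
  "i < N \<Longrightarrow> j < N \<Longrightarrow>
     ((1/t) \<cdot>\<^sub>m A + (1/(1-t)) \<cdot>\<^sub>m B) $$ (i,j) = A $$ (i,j) / t + B $$ (i,j) / (1-t)"
  using A B by simp

lemma two_pole_fuchsian: "fuchsian N (\<lambda>t. (1/t) \<cdot>\<^sub>m A + (1/(1-t)) \<cdot>\<^sub>m B) {0, 1}"
  unfolding fuchsian_def
proof (intro conjI exI[of _ "\<lambda>p. if p = 0 then A else - B"] ballI allI impI)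
  fix t :: complex and i j
  assume "t \<notin> {0, 1}" "i < N" "j < N"
  then show "((1/t) \<cdot>\<^sub>m A + (1/(1-t)) \<cdot>\<^sub>m B) $$ (i,j)
      = (\<Sum>p\<in>{0, 1}. (if p = 0 then A else - B) $$ (i,j) / (t - p))"
    using A B by (simp add: two_pole_entry field_simps)
qed (use A B in auto)

lemma two_pole_residue_0: "residue_at N (\<lambda>t. (1/t) \<cdot>\<^sub>m A + (1/(1-t)) \<cdot>\<^sub>m B) 0 A"
  unfolding residue_at_def
proof (intro conjI allI impI)
  fix i j assume ij: "i < N" "j < N"
  have "((\<lambda>t. A $$ (i,j) + t * B $$ (i,j) / (1-t))
        \<longlongrightarrow> A $$ (i,j) + 0 * B $$ (i,j) / (1-0)) (at 0)"
    by (intro tendsto_intros) auto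
  moreover have "\<forall>\<^sub>F t in at 0. A $$ (i,j) + t * B $$ (i,j) / (1-t)
      = (t - 0) * ((1/t) \<cdot>\<^sub>m A + (1/(1-t)) \<cdot>\<^sub>m B) $$ (i,j)"
    by (auto simp: eventually_at_filter two_pole_entry ij field_simps)
  ultimately show "((\<lambda>t. (t - 0) * ((1/t) \<cdot>\<^sub>m A + (1/(1-t)) \<cdot>\<^sub>m B) $$ (i,j))
        \<longlongrightarrow> A $$ (i,j)) (at 0)"
    by (auto intro: Lim_transform_eventually)
qed (rule A)

lemma two_pole_residue_1: "residue_at N (\<lambda>t. (1/t) \<cdot>\<^sub>m A + (1/(1-t)) \<cdot>\<^sub>m B) 1 (- B)"
  unfolding residue_at_def
proof (intro conjI allI impI)
  fix i j assume ij: "i < N" "j < N"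
  have "((\<lambda>t. (t - 1) * A $$ (i,j) / t - B $$ (i,j))
        \<longlongrightarrow> (1 - 1) * A $$ (i,j) / 1 - B $$ (i,j)) (at 1)"
    by (intro tendsto_intros) auto
  moreover have "\<forall>\<^sub>F t in at 1. (t - 1) * A $$ (i,j) / t - B $$ (i,j)
      = (t - 1) * ((1/t) \<cdot>\<^sub>m A + (1/(1-t)) \<cdot>\<^sub>m B) $$ (i,j)"
    by (auto simp: eventually_at_filter two_pole_entry ij field_simps)
  ultimately show "((\<lambda>t. (t - 1) * ((1/t) \<cdot>\<^sub>m A + (1/(1-t)) \<cdot>\<^sub>m B) $$ (i,j))
        \<longlongrightarrow> (- B) $$ (i,j)) (at 1)"
    using ij B by (auto intro: Lim_transform_eventually)
qed (use B in simp)

lemma two_pole_residue_inf: "residue_at_inf N (\<lambda>t. (1/t) \<cdot>\<^sub>m A + (1/(1-t)) \<cdot>\<^sub>m B) (B - A)"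
  unfolding residue_at_inf_def
proof (intro conjI allI impI)
  fix i j assume ij: "i < N" "j < N"
  have "((\<lambda>t. B $$ (i,j) / (1 - inverse t) - A $$ (i,j))
        \<longlongrightarrow> B $$ (i,j) / (1 - 0) - A $$ (i,j)) at_infinity"
    by (intro tendsto_intros tendsto_inverse_0) auto
  moreover have "\<forall>\<^sub>F t in at_infinity. t \<noteq> (0::complex) \<and> t \<noteq> 1"
    unfolding eventually_at_infinity by (rule exI[of _ 2]) auto
  then have "\<forall>\<^sub>F t in at_infinity. B $$ (i,j) / (1 - inverse t) - A $$ (i,j)
      = - t * ((1/t) \<cdot>\<^sub>m A + (1/(1-t)) \<cdot>\<^sub>m B) $$ (i,j)"
    by eventually_elim (simp add: two_pole_entry ij field_simps)
  ultimately show "((\<lambda>t. - t * ((1/t) \<cdot>\<^sub>m A + (1/(1-t)) \<cdot>\<^sub>m B) $$ (i,j))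
        \<longlongrightarrow> (B - A) $$ (i,j)) at_infinity"
    using ij A B by (auto intro: Lim_transform_eventually)
qed (use A B in auto)

end

lemma asum_Suc_length:
  assumes "l \<ge> -1"
  shows "asum n \<alpha> k (l + 1) = alp n \<alpha> k + asum n \<alpha> (Suc k) l"
proof (cases "l = -1")
  case False
  with assms have "nat (l + 1) = Suc (nat l)" "0 \<le> l" by auto
  then show ?thesis
    by (simp add: asum_def sum.atLeast_Suc_atMost)
qed (simp add: asum_def)

lemma A0_carrier: "A0 n \<alpha> \<in> carrier_mat (n+1) (n+1)"
  by (simp add: A0_def)

lemma A1_carrier: "A1 n \<alpha> \<in> carrier_mat (n+1) (n+1)"
  by (simp add: A1_def)

lemma A0_diag:
  assumes "i \<le> n"
  shows "A0 n \<alpha> $$ (i,i) = - asum n \<alpha> (2*i+2) (2*int n - 2*int i - 1)"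
  using assms by (cases "i = n") (auto simp: A0_def asum_def)

lemma dH_dx_at_y_zero: "dH_dx n \<alpha> t x (\<lambda>_. 0) i = 0"
  by (simp add: dH_dx_def ham_def)

lemma coeff_row_sum:
  assumes "i \<le> n"
  shows "(\<Sum>j<n+1. coeff n \<alpha> t $$ (i,j) * x j) =
     (1/t) * (- asum n \<alpha> (2*i+2) (2*int n - 2*int i - 1) * x i + (\<Sum>k\<in>{i<..n}. x k * alp n \<alpha> (2*k+1)))
     + (1/(1-t)) * (\<Sum>k\<le>n. x k * alp n \<alpha> (2*k+1))"
proof -
  have A0_row: "(\<Sum>j\<le>n. A0 n \<alpha> $$ (i,j) * x j) =
      - asum n \<alpha> (2*i+2) (2*int n - 2*int i - 1) * x i + (\<Sum>k\<in>{i<..n}. x k * alp n \<alpha> (2*k+1))"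
  proof -
    have "(\<Sum>j\<le>n. A0 n \<alpha> $$ (i,j) * x j) =
        (\<Sum>j\<le>n. (if j = i then - asum n \<alpha> (2*i+2) (2*int n - 2*int i - 1) * x i else 0)
                + (if i < j then x j * alp n \<alpha> (2*j+1) else 0))"
      using assms A0_diag[OF assms] by (intro sum.cong) (auto simp: A0_def mult.commute)
    also have "\<dots> = - asum n \<alpha> (2*i+2) (2*int n - 2*int i - 1) * x i + (\<Sum>k\<in>{i<..n}. x k * alp n \<alpha> (2*k+1))"
      using assms by (simp add: sum.distrib sum_atMost_if_less)
    finally show ?thesis .
  qed
  have "(\<Sum>j<n+1. coeff n \<alpha> t $$ (i,j) * x j) =
      (1/t) * (\<Sum>j\<le>n. A0 n \<alpha> $$ (i,j) * x j) + (1/(1-t)) * (\<Sum>j\<le>n. A1 n \<alpha> $$ (i,j) * x j)"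
    using assms by (simp add: coeff_def A0_def A1_def sum.distrib sum_distrib_left algebra_simps
        flip: lessThan_Suc_atMost)
  moreover have "(\<Sum>j\<le>n. A1 n \<alpha> $$ (i,j) * x j) = (\<Sum>k\<le>n. x k * alp n \<alpha> (2*k+1))"
    using assms by (simp add: A1_def mult.commute)
  ultimately show ?thesis by (simp only: A0_row)
qed

lemma ham_has_derivative_along_y_axis:
  assumes "i \<le> n"
  shows "((\<lambda>z. ham n \<alpha> t x ((\<lambda>_. 0)(i := z))) has_field_derivative
           (\<Sum>j<n+1. coeff n \<alpha> t $$ (i,j) * x j)) (at 0)"
proof -
  have delta: "(if k = i then z else 0) = z * of_bool (k = i)" for k and z :: complex
    by simp
  show ?thesis
    unfolding ham_def fun_upd_def delta coeff_row_sum[OF assms]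
    apply (rule derivative_eq_intros refl)+
    using assms by (simp add: sum_delta_of_bool_mult sum_atMost_if_less sum_subtractf
        del: sum_of_bool_eq sum_of_bool_mult_eq)
qed

lemma dH_dy_at_y_zero:
  assumes "i \<le> n"
  shows "dH_dy n \<alpha> t x (\<lambda>_. 0) i = (\<Sum>j<n+1. coeff n \<alpha> t $$ (i,j) * x j)"
  unfolding dH_dy_def using DERIV_imp_deriv[OF ham_has_derivative_along_y_axis[OF assms]] by simp

lemma ham_solution_y_zero_iff_lin_solution:
  "ham_solution n \<alpha> 0 U x (\<lambda>t i. 0) \<longleftrightarrow> lin_solution (n+1) (coeff n \<alpha>) U x"
  unfolding ham_solution_def lin_solution_def
  by (auto simp: dH_dx_at_y_zero dH_dy_at_y_zero less_Suc_eq_le)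

lemma char_poly_A0:
  "char_poly (A0 n \<alpha>) = (\<Prod>i\<le>n. [: asum n \<alpha> (2*i+2) (2*int n - 2*int i - 1), 1 :])"
proof -
  have "char_poly (A0 n \<alpha>) = (\<Prod>i<n+1. [:- A0 n \<alpha> $$ (i,i), 1:])"
    by (rule char_poly_upper_triangular_prod[OF A0_carrier]) (simp add: upper_triangular_def A0_def)
  then show ?thesis
    by (simp add: A0_diag lessThan_Suc_atMost del: prod.lessThan_Suc)
qed

lemma char_poly_neg_A1:
  "char_poly (- A1 n \<alpha>) = [: 0, 1 :] ^ n * [: (\<Sum>i\<le>n. alp n \<alpha> (2*i+1)), 1 :]"
proof -
  have "- A1 n \<alpha> = mat (n+1) (n+1) (\<lambda>(i,j). - alp n \<alpha> (2*j+1))"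
    by (rule eq_matI) (auto simp: A1_def)
  then show ?thesis
    by (simp add: char_poly_equal_rows sum_negf lessThan_Suc_atMost mult.commute del: sum.lessThan_Suc)
qed

lemma char_poly_A1_minus_A0:
  "char_poly (A1 n \<alpha> - A0 n \<alpha>) = (\<Prod>i\<le>n. [: - asum n \<alpha> (2*i+1) (2*int n - 2*int i), 1 :])"
proof -
  have carrier: "A1 n \<alpha> - A0 n \<alpha> \<in> carrier_mat (n+1) (n+1)"
    using A0_carrier by (rule minus_carrier_mat)
  have diag: "(A1 n \<alpha> - A0 n \<alpha>) $$ (i,i) = asum n \<alpha> (2*i+1) (2*int n - 2*int i)" if "i \<le> n" for i
  proof -
    have "(A1 n \<alpha> - A0 n \<alpha>) $$ (i,i) = alp n \<alpha> (2*i+1) - A0 n \<alpha> $$ (i,i)"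
      using that by (simp add: A1_def A0_def)
    then show ?thesis
      using that asum_Suc_length[of "2*int n - 2*int i - 1" n \<alpha> "2*i+1"] by (simp add: A0_diag)
  qed
  have "char_poly (A1 n \<alpha> - A0 n \<alpha>) = (\<Prod>i<n+1. [:- (A1 n \<alpha> - A0 n \<alpha>) $$ (i,i), 1:])"
    by (rule char_poly_lower_triangular_prod[OF carrier])
       (auto simp: upper_triangular_def A0_def A1_def)
  then show ?thesis
    by (simp add: diag lessThan_Suc_atMost del: prod.lessThan_Suc)
qed

theorem proposition2p3:
  fixes n :: nat and \<alpha> :: "nat \<Rightarrow> complex"
  assumes "n \<ge> 1"
    and "(\<Sum>i\<le>2*n+1. \<alpha> i) = 1"
  shows
    "(\<forall>U x. open U \<longrightarrow> U \<subseteq> - {0, 1} \<longrightarrow>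
        (ham_solution n \<alpha> 0 U x (\<lambda>t i. 0) \<longleftrightarrow> lin_solution (n+1) (coeff n \<alpha>) U x))
   \<and> fuchsian (n+1) (coeff n \<alpha>) {0, 1}
   \<and> (\<exists>R. residue_at (n+1) (coeff n \<alpha>) 0 R \<and>
          char_poly R = (\<Prod>i\<le>n. [: asum n \<alpha> (2*i+2) (2*int n - 2*int i - 1), 1 :]))
   \<and> (\<exists>R. residue_at (n+1) (coeff n \<alpha>) 1 R \<and>
          char_poly R = [: 0, 1 :] ^ n * [: (\<Sum>i\<le>n. alp n \<alpha> (2*i+1)), 1 :])
   \<and> (\<exists>R. residue_at_inf (n+1) (coeff n \<alpha>) R \<and>
          char_poly R = (\<Prod>i\<le>n. [: - asum n \<alpha> (2*i+1) (2*int n - 2*int i), 1 :]))"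
proof -
  have coeff: "coeff n \<alpha> = (\<lambda>t. (1/t) \<cdot>\<^sub>m A0 n \<alpha> + (1/(1-t)) \<cdot>\<^sub>m A1 n \<alpha>)"
    by (rule ext) (rule coeff_def)
  have A: "A0 n \<alpha> \<in> carrier_mat (n+1) (n+1)" and B: "A1 n \<alpha> \<in> carrier_mat (n+1) (n+1)"
    by (rule A0_carrier A1_carrier)+
  show ?thesis
    using ham_solution_y_zero_iff_lin_solution
      two_pole_fuchsian[OF A B, folded coeff]
      two_pole_residue_0[OF A B, folded coeff] char_poly_A0
      two_pole_residue_1[OF A B, folded coeff] char_poly_neg_A1
      two_pole_residue_inf[OF A B, folded coeff] char_poly_A1_minus_A0
    by blast
qed

end
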